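(* Let $S$ be a finite set, $\Delta$ a nonnegative integer, and $w:S\to\{-\Delta,\dots,\Delta\}$ integer weights with $|w(S)|=\mu$, where $w(S)=\sum_{s\in S}w(s)$. Let $S^+=\{s\in S: w(s)\ge 0\}$. Let $S_1,\dots,S_\ell$ be a partitioning of $S$ into subsets. Then there exists an index $i$ such that \[ |S^+\cap S_i|\ge\frac{|S|-\mu}{\ell\cdot(\Delta+1)}. \] *)

theory Defs
  imports Complex_Main
begin

end

theory Submission
  imports Defs
begin

text \<open>Every element of \<open>S\<close> of negative weight has weight at most \<open>-1\<close>, and every other
  one weight at most \<open>\<Delta>\<close>; hence \<open>w(S) \<le> \<Delta> |S\<^sup>+| - |S - S\<^sup>+|\<close>, i.e.
  \<open>|S| - \<mu> \<le> |S| + w(S) \<le> (\<Delta> + 1) |S\<^sup>+|\<close>. Splitting \<open>S\<^sup>+\<close> along the \<open>\<ell>\<close> parts, one of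
  them receives at least the average share \<open>|S\<^sup>+| / \<ell>\<close>.\<close>

lemma card_plus_sum_le_card_nonneg:
  fixes w :: "'a \<Rightarrow> int"
  assumes "finite S" and "\<forall>s\<in>S. w s \<le> \<Delta>"
  shows "int (card S) + (\<Sum>s\<in>S. w s) \<le> (\<Delta> + 1) * int (card {s\<in>S. 0 \<le> w s})"
proof -
  define A where "A = {s\<in>S. 0 \<le> w s}"
  define B where "B = {s\<in>S. w s < 0}"
  have fin: "finite A" "finite B" and disj: "A \<inter> B = {}" and S_eq: "S = A \<union> B"
    using assms(1) by (auto simp: A_def B_def)
  have "(\<Sum>s\<in>A. w s) \<le> int (card A) * \<Delta>"
    using sum_bounded_above[of A w \<Delta>] assms(2) by (auto simp: A_def)
  moreover have "(\<Sum>s\<in>B. w s) \<le> int (card B) * (-1)"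
    using sum_bounded_above[of B w "-1"] by (auto simp: B_def)
  moreover have "card S = card A + card B"
    using card_Un_disjoint[OF fin disj] S_eq by simp
  moreover have "(\<Sum>s\<in>S. w s) = (\<Sum>s\<in>A. w s) + (\<Sum>s\<in>B. w s)"
    using sum.union_disjoint[OF fin disj] S_eq by simp
  ultimately show ?thesis
    by (simp add: A_def[symmetric] algebra_simps)
qed

lemma exists_part_card_ge_average:
  assumes "finite A" and "finite I" and "I \<noteq> {}"
    and "A \<subseteq> (\<Union>i\<in>I. P i)"
    and "\<forall>i\<in>I. \<forall>j\<in>I. i \<noteq> j \<longrightarrow> P i \<inter> P j = {}"
  shows "\<exists>i\<in>I. card A \<le> card I * card (A \<inter> P i)"
proof (rule ccontr)
  assume "\<not> ?thesis"
  then have small: "\<forall>i\<in>I. card I * card (A \<inter> P i) < card A"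
    by (simp add: not_le)
  have "A = (\<Union>i\<in>I. A \<inter> P i)"
    using assms(4) by blast
  also have "card \<dots> = (\<Sum>i\<in>I. card (A \<inter> P i))"
    by (rule card_UN_disjoint) (use assms(1,2,5) in blast)+
  finally have "card I * card A = (\<Sum>i\<in>I. card I * card (A \<inter> P i))"
    by (simp add: sum_distrib_left)
  also have "\<dots> < (\<Sum>i\<in>I. card A)"
    by (rule sum_strict_mono) (use assms(2,3) small in auto)
  also have "\<dots> = card I * card A"
    by simp
  finally show False
    by simp
qed

theorem proposition7:
  fixes S :: "'a set" and \<Delta> :: nat and w :: "'a \<Rightarrow> int" and \<mu> :: int
    and l :: nat and P :: "nat \<Rightarrow> 'a set"
  assumes "finite S"
    and "\<forall>s\<in>S. - int \<Delta> \<le> w s \<and> w s \<le> int \<Delta>"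
    and "\<mu> = \<bar>(\<Sum>s\<in>S. w s)\<bar>"
    and "l \<ge> 1"
    and "(\<Union>i\<in>{1..l}. P i) = S"
    and "\<forall>i\<in>{1..l}. \<forall>j\<in>{1..l}. i \<noteq> j \<longrightarrow> P i \<inter> P j = {}"
  shows "\<exists>i\<in>{1..l}. real (card ({s\<in>S. w s \<ge> 0} \<inter> P i))
           \<ge> (real (card S) - real_of_int \<mu>) / (real l * (real \<Delta> + 1))"
proof -
  define A where "A = {s\<in>S. w s \<ge> 0}"
  obtain i where i: "i \<in> {1..l}" and share: "card A \<le> l * card (A \<inter> P i)"
    using exists_part_card_ge_average[of A "{1..l}" P] assms(1,4-6) by (auto simp: A_def)
  have "int (card S) - \<mu> \<le> (int \<Delta> + 1) * int (card A)"
    using card_plus_sum_le_card_nonneg[of S w "int \<Delta>"] assms(1-3) by (auto simp: A_def)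
  then have "real_of_int (int (card S) - \<mu>) \<le> real_of_int ((int \<Delta> + 1) * int (card A))"
    by (simp only: of_int_le_iff)
  then have "real (card S) - real_of_int \<mu> \<le> (real \<Delta> + 1) * real (card A)"
    by simp
  also have "(real \<Delta> + 1) * real (card A) \<le> (real \<Delta> + 1) * (real l * real (card (A \<inter> P i)))"
    using share by (intro mult_left_mono) (simp_all flip: of_nat_mult)
  finally have "(real (card S) - real_of_int \<mu>) / (real l * (real \<Delta> + 1)) \<le> real (card (A \<inter> P i))"
    using assms(4) by (simp add: pos_divide_le_eq mult_ac)
  then show ?thesis
    using i by (auto simp: A_def)
qed

end
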